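(* Let $(\mathbf{i},\mathbf{a})\in I^m\times\mathbb{Z}^m$ be an integral pair and let $\pi_{\mathbf{a}}\in S_m$ be the shortest permutation such that $\pi_{\mathbf{a}}(\mathbf{a})$ is weakly increasing with respect to the preorder $\preceq$. Then $\pi_{\mathbf{a}}$ is $(\mathbf{i},\mathbf{a})$-admissible.
   Context: $I$ is the vertex set of a finite simple bipartite graph $I=I_{\bar0}\sqcup I_{\bar1}$ (parities $0,1$); every edge is oriented from its even endpoint to its odd endpoint, and $i\leftarrow j$ means there is an oriented edge from $j$ to $i$. $(\mathbf{i},\mathbf{a})$ is integral if each $a_k$ is an integer whose residue mod 2 equals the parity of $i_k$. The preorder $\preceq$ on $\mathbb{Z}$ is $a\preceq b$ iff $\lfloor a/2\rfloor\le\lfloor b/2\rfloor$. $S_m$ acts on tuples by $\pi(\mathbf{a})=(a_{\pi^{-1}(1)},\dots,a_{\pi^{-1}(m)})$. Distinct indices $k,l$ are not $(\mathbf{i},\mathbf{a})$-switchable if $i_k\leftarrow i_l$ and $a_k=a_l+1$ (checked for the pair in either order); $\pi$ is $(\mathbf{i},\mathbf{a})$-admissible if for every non-switchable pair $k,l$, $\pi(k),\pi(l)$ are in the same relative order as $k,l$. *)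

theory Defs
  imports Complex_Main "HOL-Combinatorics.Permutations"
begin

(* Finite simple bipartite graph on vertex set V with parity p : V -> {0,1};
   the parts are I_0 = {v. p v = 0} and I_1 = {v. p v = 1}. *)
definition bipartite_graph :: "'v set \<Rightarrow> ('v \<Rightarrow> 'v \<Rightarrow> bool) \<Rightarrow> ('v \<Rightarrow> int) \<Rightarrow> bool" where
  "bipartite_graph V E p \<longleftrightarrow> finite V
     \<and> (\<forall>v\<in>V. p v \<in> {0, 1})
     \<and> (\<forall>u v. E u v \<longrightarrow> u \<in> V \<and> v \<in> V)
     \<and> (\<forall>u v. E u v \<longrightarrow> E v u)
     \<and> (\<forall>v. \<not> E v v)
     \<and> (\<forall>u v. E u v \<longrightarrow> p u \<noteq> p v)"

(* i <- j : there is an oriented edge from j to i (edges go even -> odd) *)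
definition arrow :: "('v \<Rightarrow> 'v \<Rightarrow> bool) \<Rightarrow> ('v \<Rightarrow> int) \<Rightarrow> 'v \<Rightarrow> 'v \<Rightarrow> bool" where
  "arrow E p i j \<longleftrightarrow> E j i \<and> p j = 0 \<and> p i = 1"

(* (i,a) integral; tuples are lists indexed 0..m-1 *)
definition integral_pair :: "'v set \<Rightarrow> ('v \<Rightarrow> int) \<Rightarrow> 'v list \<Rightarrow> int list \<Rightarrow> bool" where
  "integral_pair V p is as \<longleftrightarrow> length is = length as \<and> set is \<subseteq> V
     \<and> (\<forall>k < length as. as ! k mod 2 = p (is ! k))"

definition preceq :: "int \<Rightarrow> int \<Rightarrow> bool" where
  "preceq a b \<longleftrightarrow> \<lfloor>real_of_int a / 2\<rfloor> \<le> \<lfloor>real_of_int b / 2\<rfloor>"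

definition act :: "(nat \<Rightarrow> nat) \<Rightarrow> 'a list \<Rightarrow> 'a list" where
  "act \<pi> xs = permute_list (inv \<pi>) xs"

(* Coxeter length of a permutation of {0..<m}: number of inversions *)
definition perm_length :: "nat \<Rightarrow> (nat \<Rightarrow> nat) \<Rightarrow> nat" where
  "perm_length m \<pi> = card {(k, l). k < l \<and> l < m \<and> \<pi> l < \<pi> k}"

definition not_switchable :: "('v \<Rightarrow> 'v \<Rightarrow> bool) \<Rightarrow> ('v \<Rightarrow> int) \<Rightarrow> 'v list \<Rightarrow> int list \<Rightarrow> nat \<Rightarrow> nat \<Rightarrow> bool" where
  "not_switchable E p is as k l \<longleftrightarrow>
     (arrow E p (is ! k) (is ! l) \<and> as ! k = as ! l + 1) \<or>
     (arrow E p (is ! l) (is ! k) \<and> as ! l = as ! k + 1)"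

definition admissible :: "('v \<Rightarrow> 'v \<Rightarrow> bool) \<Rightarrow> ('v \<Rightarrow> int) \<Rightarrow> 'v list \<Rightarrow> int list \<Rightarrow> (nat \<Rightarrow> nat) \<Rightarrow> bool" where
  "admissible E p is as \<pi> \<longleftrightarrow>
     (\<forall>k < length as. \<forall>l < length as. k \<noteq> l \<and> not_switchable E p is as k l
        \<longrightarrow> (\<pi> k < \<pi> l \<longleftrightarrow> k < l))"

end

theory Submission
  imports Defs "HOL-Library.Product_Lexorder"
begin

(* Non-switchable indices k, l satisfy a_k div 2 = a_l div 2: the arrow makes i_k odd, hence
   a_k odd, and a_k = a_l + 1. So it suffices that a shortest sorting permutation keeps indices
   with equal key a div 2 in their original order. The stable sort sigma by this key inverts
   exactly the pairs with strictly decreasing keys, and every sorting permutation must invert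
   those too; a sorting permutation with no more inversions than sigma therefore inverts no
   pair of equal keys. *)

lemma sorted_wrt_act_iff:
  assumes perm: "\<pi> permutes {..<length xs}"
  shows "sorted_wrt R (act \<pi> xs) \<longleftrightarrow>
    (\<forall>k<length xs. \<forall>l<length xs. \<pi> k < \<pi> l \<longrightarrow> R (xs ! k) (xs ! l))"
    (is "_ \<longleftrightarrow> ?ordered")
proof -
  have inv_perm: "inv \<pi> permutes {..<length xs}"
    using perm by (rule permutes_inv)
  have nth_act: "act \<pi> xs ! i = xs ! inv \<pi> i" if "i < length xs" for i
    unfolding act_def using permute_list_nth[OF inv_perm that] .
  have in_range: "\<pi> k < length xs" "inv \<pi> k < length xs" if "k < length xs" for k
    using that permutes_in_image[OF perm] permutes_in_image[OF inv_perm] by auto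
  have inverses: "inv \<pi> (\<pi> k) = k" "\<pi> (inv \<pi> k) = k" for k
    using permutes_inverses[OF perm] by auto
  show ?thesis
    unfolding sorted_wrt_iff_nth_less
  proof (intro iffI allI impI)
    fix k l
    assume "\<forall>i j. i < j \<longrightarrow> j < length (act \<pi> xs) \<longrightarrow> R (act \<pi> xs ! i) (act \<pi> xs ! j)"
      and "k < length xs" "l < length xs" "\<pi> k < \<pi> l"
    then show "R (xs ! k) (xs ! l)"
      using in_range inverses nth_act by (metis act_def length_permute_list)
  next
    fix i j
    assume ?ordered and "i < j" "j < length (act \<pi> xs)"
    then show "R (act \<pi> xs ! i) (act \<pi> xs ! j)"
      using in_range inverses nth_act by (simp add: act_def)
  qed
qed

definition inversions :: "nat \<Rightarrow> (nat \<Rightarrow> nat) \<Rightarrow> (nat \<times> nat) set" where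
  "inversions m \<pi> = {(k, l). k < l \<and> l < m \<and> \<pi> l < \<pi> k}"

lemma perm_length_eq_card_inversions: "perm_length m \<pi> = card (inversions m \<pi>)"
  by (simp add: perm_length_def inversions_def)

lemma finite_inversions: "finite (inversions m \<pi>)"
  by (rule finite_subset[of _ "{..<m} \<times> {..<m}"]) (auto simp: inversions_def)

definition rank :: "nat \<Rightarrow> (nat \<Rightarrow> 'a::linorder) \<Rightarrow> nat \<Rightarrow> nat" where
  "rank m h k = (if k < m then card {j. j < m \<and> h j < h k} else k)"

lemma rank_less_iff:
  assumes "k < m" "l < m"
  shows "rank m h k < rank m h l \<longleftrightarrow> h k < h l"
proof
  assume "h k < h l"
  then have "{j. j < m \<and> h j < h k} \<subset> {j. j < m \<and> h j < h l}"
    using \<open>k < m\<close> by auto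
  then show "rank m h k < rank m h l"
    using assms by (simp add: rank_def psubset_card_mono)
next
  assume "rank m h k < rank m h l"
  moreover have "rank m h l \<le> rank m h k" if "h l \<le> h k"
    using assms that by (auto simp: rank_def intro!: card_mono)
  ultimately show "h k < h l"
    by force
qed

lemma rank_permutes:
  assumes "inj_on h {..<m}"
  shows "rank m h permutes {..<m}"
proof (rule bij_imp_permutes)
  have "rank m h k < m" if "k < m" for k
  proof -
    have "{j. j < m \<and> h j < h k} \<subseteq> {..<m} - {k}"
      by auto
    then have "card {j. j < m \<and> h j < h k} \<le> card ({..<m} - {k})"
      by (intro card_mono) auto
    then show ?thesis
      using that by (simp add: rank_def)
  qed
  moreover have "inj_on (rank m h) {..<m}"
  proof (rule inj_onI)
    fix k l
    assume "k \<in> {..<m}" "l \<in> {..<m}" "rank m h k = rank m h l"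
    then have "\<not> h k < h l" "\<not> h l < h k"
      using rank_less_iff[of k m l h] rank_less_iff[of l m k h] by auto
    then show "k = l"
      using assms \<open>k \<in> {..<m}\<close> \<open>l \<in> {..<m}\<close> by (auto dest: inj_onD)
  qed
  ultimately show "bij_betw (rank m h) {..<m} {..<m}"
    by (simp add: bij_betw_def endo_inj_surj image_subset_iff)
qed (simp add: rank_def)

definition sorts_by :: "nat \<Rightarrow> (nat \<Rightarrow> 'a::order) \<Rightarrow> (nat \<Rightarrow> nat) \<Rightarrow> bool" where
  "sorts_by m f \<pi> \<longleftrightarrow> (\<forall>k<m. \<forall>l<m. \<pi> k < \<pi> l \<longrightarrow> f k \<le> f l)"

(* Pairs are ordered lexicographically, so ties in f are broken by the index. *)
definition stable_sort_perm :: "nat \<Rightarrow> (nat \<Rightarrow> 'a::linorder) \<Rightarrow> nat \<Rightarrow> nat" where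
  "stable_sort_perm m f = rank m (\<lambda>k. (f k, k))"

lemma stable_sort_perm_permutes: "stable_sort_perm m f permutes {..<m}"
  unfolding stable_sort_perm_def by (rule rank_permutes) (simp add: inj_on_def)

lemma stable_sort_perm_less_iff:
  assumes "k < m" "l < m"
  shows "stable_sort_perm m f k < stable_sort_perm m f l \<longleftrightarrow> f k < f l \<or> f k = f l \<and> k < l"
  using assms by (simp add: stable_sort_perm_def rank_less_iff less_prod_def')

lemma sorts_by_stable_sort_perm: "sorts_by m f (stable_sort_perm m f)"
  by (auto simp: sorts_by_def stable_sort_perm_less_iff)

lemma inversions_stable_sort_perm:
  "inversions m (stable_sort_perm m f) = {(k, l). k < l \<and> l < m \<and> f l < f k}"
  by (auto simp: inversions_def stable_sort_perm_less_iff)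

lemma inversions_stable_sort_perm_subset:
  assumes "sorts_by m f \<pi>" "inj_on \<pi> {..<m}"
  shows "inversions m (stable_sort_perm m f) \<subseteq> inversions m \<pi>"
proof (clarsimp simp: inversions_stable_sort_perm)
  fix k l
  assume "k < l" "l < m" "f l < f k"
  then have "\<not> \<pi> k < \<pi> l"
    using assms(1) unfolding sorts_by_def by (meson leD order.strict_trans)
  moreover have "\<pi> k \<noteq> \<pi> l"
    using assms(2) \<open>k < l\<close> \<open>l < m\<close> by (simp add: inj_on_contraD)
  ultimately show "(k, l) \<in> inversions m \<pi>"
    using \<open>k < l\<close> \<open>l < m\<close> by (simp add: inversions_def)
qed

lemma shortest_sorting_perm_keeps_ties:
  assumes perm: "\<pi> permutes {..<m}" and sorts: "sorts_by m f \<pi>"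
    and shortest: "perm_length m \<pi> \<le> perm_length m (stable_sort_perm m f)"
    and "k < m" "l < m" "f k = f l"
  shows "\<pi> k < \<pi> l \<longleftrightarrow> k < l"
proof -
  have inj: "inj_on \<pi> {..<m}"
    using perm by (rule permutes_inj_on)
  have tie_in_order: "\<pi> i < \<pi> j" if "i < j" "j < m" "f i = f j" for i j
  proof (rule ccontr)
    assume "\<not> \<pi> i < \<pi> j"
    moreover have "\<pi> i \<noteq> \<pi> j"
      using inj that by (simp add: inj_on_contraD)
    ultimately have "(i, j) \<in> inversions m \<pi> - inversions m (stable_sort_perm m f)"
      using that by (simp add: inversions_stable_sort_perm) (simp add: inversions_def)
    moreover have "inversions m (stable_sort_perm m f) \<subseteq> inversions m \<pi>"
      using sorts inj by (rule inversions_stable_sort_perm_subset)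
    ultimately have "card (inversions m (stable_sort_perm m f)) < card (inversions m \<pi>)"
      by (metis DiffD1 DiffD2 finite_inversions psubsetI psubset_card_mono)
    with shortest show False
      by (simp add: perm_length_eq_card_inversions)
  qed
  show ?thesis
    using tie_in_order[of k l] tie_in_order[of l k] assms(4-6) by (cases k l rule: linorder_cases) auto
qed

lemma preceq_iff_div: "preceq a b \<longleftrightarrow> a div 2 \<le> b div 2"
  unfolding preceq_def
  by (metis floor_divide_of_int_eq of_int_numeral)

lemma div2_eq_if_odd_succ:
  fixes a b :: int
  assumes "a mod 2 = 1" "a = b + 1"
  shows "a div 2 = b div 2"
  using assms by presburger

lemma not_switchable_div_eq:
  assumes "integral_pair V p is as" "k < length as" "l < length as"
    and "not_switchable E p is as k l"
  shows "as ! k div 2 = as ! l div 2"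
proof -
  have "as ! k mod 2 = p (is ! k)" "as ! l mod 2 = p (is ! l)"
    using assms(1-3) unfolding integral_pair_def by auto
  with assms(4) show ?thesis
    unfolding not_switchable_def arrow_def
    by (metis div2_eq_if_odd_succ)
qed

lemma sorted_wrt_preceq_act_iff:
  assumes "\<pi> permutes {..<length as}"
  shows "sorted_wrt preceq (act \<pi> as) \<longleftrightarrow> sorts_by (length as) (\<lambda>k. as ! k div 2) \<pi>"
  using assms by (simp add: sorted_wrt_act_iff sorts_by_def preceq_iff_div)

theorem lemma5p9:
  fixes V :: "'v set" and E :: "'v \<Rightarrow> 'v \<Rightarrow> bool" and p :: "'v \<Rightarrow> int"
    and "is" :: "'v list" and as :: "int list" and m :: nat and \<pi> :: "nat \<Rightarrow> nat"
  assumes "bipartite_graph V E p"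
    and "length is = m" and "length as = m"
    and "integral_pair V p is as"
    and "\<pi> permutes {..<m}"
    and "sorted_wrt preceq (act \<pi> as)"
    and "\<forall>\<sigma>. \<sigma> permutes {..<m} \<and> sorted_wrt preceq (act \<sigma> as)
           \<longrightarrow> perm_length m \<pi> \<le> perm_length m \<sigma>"
  shows "admissible E p is as \<pi>"
proof -
  define f where "f = (\<lambda>k. as ! k div 2)"
  have sorts: "sorts_by m f \<pi>"
    using assms(3,5,6) by (simp add: sorted_wrt_preceq_act_iff f_def)
  have "sorted_wrt preceq (act (stable_sort_perm m f) as)"
    using sorted_wrt_preceq_act_iff[of "stable_sort_perm m f" as]
    by (simp add: assms(3) stable_sort_perm_permutes sorts_by_stable_sort_perm f_def)
  then have shortest: "perm_length m \<pi> \<le> perm_length m (stable_sort_perm m f)"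
    using assms(7) stable_sort_perm_permutes by blast
  have "\<pi> k < \<pi> l \<longleftrightarrow> k < l" if "k < m" "l < m" "not_switchable E p is as k l" for k l
    using shortest_sorting_perm_keeps_ties[OF assms(5) sorts shortest]
      not_switchable_div_eq[OF assms(4)] that assms(3) by (simp add: f_def)
  then show ?thesis
    using assms(3) by (simp add: admissible_def)
qed

end
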